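(* Let $m\ge 2$ and $G=CK(2m-1)$. Every blocker for the simple Hamiltonian paths of $G$ contains at least two boundary edges.
   Context: $CK(2m-1)$ is the complete convex geometric graph on $2m-1$ points in convex position (vertices of a convex polygon $P$), labelled cyclically $0,\dots,2m-2$, with all segments between vertices as edges; boundary edges are the edges $[i,i+1]$ (mod $2m-1$) of $P$. A simple Hamiltonian path (SHP) is a path through all vertices whose edges pairwise do not cross. A blocker for SHPs is a set of edges of smallest possible size having an edge in common with every SHP. *)

theory Defs
  imports Main
begin

text \<open>The complete convex geometric graph CK(n): vertices 0..n-1 in convex position,
  labelled cyclically; edges are all 2-element subsets of vertices.\<close>

definition ck_edges :: "nat \<Rightarrow> nat set set" where
  "ck_edges n = {e. e \<subseteq> {..<n} \<and> card e = 2}"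

text \<open>Two segments between points in convex position cross (in their relative interiors)
  iff their four endpoints are distinct and interleave in the cyclic order; with labels
  0..n-1 this means e = {a,c}, f = {b,d} with a < b < c < d (up to swapping e and f).\<close>

definition crosses :: "nat set \<Rightarrow> nat set \<Rightarrow> bool" where
  "crosses e f \<longleftrightarrow> (\<exists>a b c d. a < b \<and> b < c \<and> c < d \<and>
      ((e = {a, c} \<and> f = {b, d}) \<or> (e = {b, d} \<and> f = {a, c})))"

definition path_edges :: "nat list \<Rightarrow> nat set set" where
  "path_edges xs = {{xs ! i, xs ! Suc i} | i. Suc i < length xs}"

definition is_shp :: "nat \<Rightarrow> nat list \<Rightarrow> bool" where
  "is_shp n xs \<longleftrightarrow> distinct xs \<and> set xs = {..<n} \<and>
     (\<forall>e\<in>path_edges xs. \<forall>f\<in>path_edges xs. \<not> crosses e f)"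

definition hits_all_shp :: "nat \<Rightarrow> nat set set \<Rightarrow> bool" where
  "hits_all_shp n B \<longleftrightarrow> (\<forall>xs. is_shp n xs \<longrightarrow> B \<inter> path_edges xs \<noteq> {})"

definition is_blocker :: "nat \<Rightarrow> nat set set \<Rightarrow> bool" where
  "is_blocker n B \<longleftrightarrow> B \<subseteq> ck_edges n \<and> hits_all_shp n B \<and>
     (\<forall>B'. B' \<subseteq> ck_edges n \<and> hits_all_shp n B' \<longrightarrow> card B \<le> card B')"

definition boundary_edges :: "nat \<Rightarrow> nat set set" where
  "boundary_edges n = {{i, Suc i mod n} | i. i < n}"

end

theory Submission
  imports Defs
begin

text \<open>Deleting any one edge from the boundary cycle of the polygon leaves a Hamiltonian path
  running along the boundary, and it is simple because a boundary edge crosses no edge at all.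
  So a set of edges meeting every SHP contains, besides any given boundary edge, another one.\<close>

lemma boundary_edge_cases:
  assumes "{x, y} \<in> boundary_edges n" "x < y"
  shows "y = Suc x \<or> (x = 0 \<and> Suc y = n)"
proof -
  obtain i where "i < n" "{x, y} = {i, Suc i mod n}"
    using assms(1) unfolding boundary_edges_def by blast
  moreover have "Suc i < n \<or> Suc i = n"
    using \<open>i < n\<close> by linarith
  ultimately show ?thesis
    using assms(2) by (auto simp: doubleton_eq_iff)
qed

lemma boundary_edge_subset: "e \<in> boundary_edges n \<Longrightarrow> e \<subseteq> {..<n}"
  unfolding boundary_edges_def by auto

lemma boundary_edge_not_crosses:
  assumes e: "e \<in> boundary_edges n" and f: "f \<subseteq> {..<n}"
  shows "\<not> crosses e f"
proof
  assume "crosses e f"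
  then obtain a b c d where abcd: "a < b" "b < c" "c < d"
    and "(e = {a, c} \<and> f = {b, d}) \<or> (e = {b, d} \<and> f = {a, c})"
    unfolding crosses_def by blast
  then show False
  proof (elim disjE conjE)
    assume "e = {a, c}" "f = {b, d}"
    then show False
      using boundary_edge_cases[of a c n] e f abcd by auto
  next
    assume "e = {b, d}"
    then show False
      using boundary_edge_cases[of b d n] e abcd by auto
  qed
qed

lemma is_shp_if_path_edges_subset_boundary:
  assumes "distinct xs" "set xs = {..<n}" "path_edges xs \<subseteq> boundary_edges n"
  shows "is_shp n xs"
proof -
  have "\<not> crosses e f" if "e \<in> boundary_edges n" "f \<in> boundary_edges n" for e f
    using boundary_edge_not_crosses[OF that(1) boundary_edge_subset[OF that(2)]] .
  then show ?thesis
    using assms unfolding is_shp_def by blast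
qed

lemma hd_last_notin_path_edges:
  assumes "distinct xs" "length xs \<ge> 3"
  shows "{hd xs, last xs} \<notin> path_edges xs"
proof
  assume "{hd xs, last xs} \<in> path_edges xs"
  then obtain i where i: "Suc i < length xs" "{hd xs, last xs} = {xs ! i, xs ! Suc i}"
    unfolding path_edges_def by blast
  have "hd xs = xs ! 0" "last xs = xs ! (length xs - 1)"
    using assms(2) by (auto simp: hd_conv_nth last_conv_nth simp flip: length_greater_0_conv)
  with i have "xs ! 0 \<in> {xs ! i, xs ! Suc i}" "xs ! (length xs - 1) \<in> {xs ! i, xs ! Suc i}"
    by auto
  moreover have "0 < length xs" "length xs - 1 < length xs" "i < length xs"
    using i(1) by auto
  ultimately have "0 \<in> {i, Suc i}" "length xs - 1 \<in> {i, Suc i}"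
    using i(1) by (auto simp: nth_eq_iff_index_eq[OF assms(1)])
  then show False
    using assms(2) by auto
qed

text \<open>The vertices \<open>j + 1, j + 2, \<dots>, j\<close> taken mod \<open>n\<close>: the boundary cycle with the edge
  \<open>{j, j + 1}\<close> removed.\<close>

definition boundary_path :: "nat \<Rightarrow> nat \<Rightarrow> nat list" where
  "boundary_path n j = rotate (Suc j) [0..<n]"

lemma length_boundary_path [simp]: "length (boundary_path n j) = n"
  by (simp add: boundary_path_def)

lemma nth_boundary_path: "i < n \<Longrightarrow> boundary_path n j ! i = (Suc j + i) mod n"
  unfolding boundary_path_def by (subst nth_rotate) auto

lemma distinct_boundary_path: "distinct (boundary_path n j)"
  by (simp add: boundary_path_def)

lemma set_boundary_path: "set (boundary_path n j) = {..<n}"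
  by (auto simp: boundary_path_def)

lemma boundary_path_eq_Nil_iff [simp]: "boundary_path n j = [] \<longleftrightarrow> n = 0"
  by (simp add: boundary_path_def)

lemma hd_boundary_path: "0 < n \<Longrightarrow> hd (boundary_path n j) = Suc j mod n"
  by (simp add: hd_conv_nth nth_boundary_path)

lemma last_boundary_path: "j < n \<Longrightarrow> last (boundary_path n j) = j"
  by (simp add: last_conv_nth nth_boundary_path)

lemma path_edges_boundary_path: "path_edges (boundary_path n j) \<subseteq> boundary_edges n"
proof
  fix e assume "e \<in> path_edges (boundary_path n j)"
  then obtain i where "Suc i < n" "e = {(Suc j + i) mod n, (Suc j + Suc i) mod n}"
    unfolding path_edges_def by (auto simp: nth_boundary_path)
  then have "e = {(Suc j + i) mod n, Suc ((Suc j + i) mod n) mod n}"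
    by (simp add: mod_Suc_eq)
  moreover have "(Suc j + i) mod n < n"
    using \<open>Suc i < n\<close> by simp
  ultimately show "e \<in> boundary_edges n"
    unfolding boundary_edges_def by blast
qed

lemma boundary_path_avoids_edge:
  assumes "n \<ge> 3" "j < n"
  shows "{j, Suc j mod n} \<notin> path_edges (boundary_path n j)"
  using hd_last_notin_path_edges[of "boundary_path n j"] assms
  by (simp add: distinct_boundary_path hd_boundary_path last_boundary_path insert_commute)

lemma is_shp_boundary_path: "is_shp n (boundary_path n j)"
  by (intro is_shp_if_path_edges_subset_boundary distinct_boundary_path set_boundary_path
      path_edges_boundary_path)

lemma hits_all_shp_boundary_edges:
  assumes "n \<ge> 3" and hits: "hits_all_shp n B"
  shows "card (B \<inter> boundary_edges n) \<ge> 2"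
proof -
  have other_boundary_edge: "\<exists>e \<in> B \<inter> boundary_edges n. e \<noteq> {j, Suc j mod n}" if "j < n" for j
  proof -
    have "B \<inter> path_edges (boundary_path n j) \<noteq> {}"
      using hits is_shp_boundary_path unfolding hits_all_shp_def by blast
    then obtain e where "e \<in> B" "e \<in> path_edges (boundary_path n j)"
      by blast
    moreover have "{j, Suc j mod n} \<notin> path_edges (boundary_path n j)"
      using boundary_path_avoids_edge[OF \<open>n \<ge> 3\<close> that] .
    ultimately have "e \<in> boundary_edges n" "e \<noteq> {j, Suc j mod n}"
      using path_edges_boundary_path by auto
    with \<open>e \<in> B\<close> show ?thesis
      by blast
  qed
  obtain e where e: "e \<in> B \<inter> boundary_edges n"
    using other_boundary_edge[of 0] assms(1) by auto
  then obtain j where "j < n" "e = {j, Suc j mod n}"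
    unfolding boundary_edges_def by blast
  with other_boundary_edge obtain e' where e': "e' \<in> B \<inter> boundary_edges n" "e' \<noteq> e"
    by blast
  have "finite (B \<inter> boundary_edges n)"
    unfolding boundary_edges_def by simp
  moreover have "{e, e'} \<subseteq> B \<inter> boundary_edges n"
    using e e'(1) by blast
  ultimately have "card {e, e'} \<le> card (B \<inter> boundary_edges n)"
    by (rule card_mono)
  then show ?thesis
    using e'(2) by simp
qed

theorem mainTheorem4:
  fixes m :: nat and B :: "nat set set"
  assumes "m \<ge> 2"
    and "is_blocker (2 * m - 1) B"
  shows "card (B \<inter> boundary_edges (2 * m - 1)) \<ge> 2"
proof (rule hits_all_shp_boundary_edges)
  show "2 * m - 1 \<ge> 3"
    using assms(1) by simp
  show "hits_all_shp (2 * m - 1) B"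
    using assms(2) unfolding is_blocker_def by simp
qed

end
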